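(* Let $\Omega\subset\mathbb{R}^n$ be a bounded, connected open set with $C^1$ boundary, let $\varphi\in\Phi_w(\Omega)$ satisfy (A0), let $\alpha=(\alpha_1,\alpha_2)\in\mathbb{R}^+\times\mathbb{R}^+$ and let $1<p\le\frac{n}{n-1}$. Let $H$ be a Hilbert space, let $K:L^p(\Omega)\to H$ be a bounded linear operator injective on the space $\mathcal{P}^1(\Omega)$ of affine functions, and let $(f_k)_k\subset H$ with $f_k\to f$ strongly in $H$. Define, for $u\in L^p(\Omega)$, $$\mathcal{F}_k(u):=\frac12\|Ku-f_k\|_H+TGV^{\varphi,2}_\alpha(u),\qquad \mathcal{F}_0(u):=\frac12\|Ku-f\|_H+TGV^{\varphi,2}_\alpha(u).$$ Then $(\mathcal{F}_k)_k$ $\Gamma$-converges to $\mathcal{F}_0$ with respect to the weak topology of $L^p(\Omega)$.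
   Context: $\varphi\in\Phi_w(\Omega)$ means $\varphi:\Omega\times[0,\infty)\to[0,\infty]$ with: $x\mapsto\varphi(x,|f(x)|)$ measurable for every measurable $f$; $t\mapsto\varphi(x,t)$ non-decreasing; $\varphi(x,0)=\lim_{t\to0^+}\varphi(x,t)=0$, $\lim_{t\to\infty}\varphi(x,t)=\infty$ for every $x$; there is $L\ge1$ independent of $x$ with $\varphi(x,s)/s\le L\varphi(x,t)/t$ for $0<s\le t$. (A0): there is $\beta\in(0,1]$ with $\varphi(x,\beta)\le1\le\varphi(x,1/\beta)$ for all $x$. Conjugate $\varphi^*(x,t)=\sup_{s\ge0}(st-\varphi(x,s))$; $\|f\|_{\varphi^*}=\inf\{\lambda>0:\int_\Omega\varphi^*(x,|f|/\lambda)dx\le1\}$ ($|\cdot|$ Euclidean/Frobenius norm). $TGV^{\varphi,2}_\alpha(u)=\sup\{\int_\Omega u\,\mathrm{div}^2\psi\,dx:\psi\in C^2_c(\Omega;\mathbb{R}^{n\times n}_{\rm sym}),\|\psi\|_{\varphi^*}\le\alpha_1,\|\mathrm{div}\,\psi\|_{\varphi^*}\le\alpha_2\}$, with $(\mathrm{div}\,\psi)_i=\sum_j\partial_j\psi_{ij}$, $\mathrm{div}^2\psi=\sum_i\partial_{ii}\psi_{ii}+2\sum_{i<j}\partial_{ij}\psi_{ij}$. *)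

theory Defs
  imports "HOL-Analysis.Analysis" "HOL-Probability.Probability"
begin

text \<open>Omega has C^1 boundary: near every boundary point x0, after choosing a unit
  normal direction e, Omega is the (strict) epigraph over the hyperplane orthogonal to e
  of a continuously differentiable function gamma.\<close>
definition C1_boundary :: "(real^'n::finite) set \<Rightarrow> bool" where
  "C1_boundary \<Omega> \<longleftrightarrow>
     (\<forall>x0\<in>frontier \<Omega>. \<exists>r>0. \<exists>e::real^'n. \<exists>\<gamma>::real^'n \<Rightarrow> real. \<exists>g::real^'n \<Rightarrow> real^'n.
        norm e = 1 \<and>
        (\<forall>x. (\<gamma> has_derivative (\<lambda>h. g x \<bullet> h)) (at x)) \<and> continuous_on UNIV g \<and>
        \<Omega> \<inter> ball x0 r = {x \<in> ball x0 r. x \<bullet> e > \<gamma> (x - (x \<bullet> e) *\<^sub>R e)})"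

definition Phi_w :: "(real^'n::finite) set \<Rightarrow> (real^'n \<Rightarrow> real \<Rightarrow> ereal) \<Rightarrow> bool" where
  "Phi_w \<Omega> \<phi> \<longleftrightarrow>
     (\<forall>f \<in> borel_measurable (lebesgue_on \<Omega>).
         (\<lambda>x. \<phi> x \<bar>f x\<bar>) \<in> borel_measurable (lebesgue_on \<Omega>)) \<and>
     (\<forall>x\<in>\<Omega>. \<forall>t\<ge>0. \<phi> x t \<ge> 0) \<and>
     (\<forall>x\<in>\<Omega>. \<forall>s t. 0 \<le> s \<and> s \<le> t \<longrightarrow> \<phi> x s \<le> \<phi> x t) \<and>
     (\<forall>x\<in>\<Omega>. \<phi> x 0 = 0 \<and> ((\<lambda>t. \<phi> x t) \<longlongrightarrow> 0) (at_right 0)) \<and>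
     (\<forall>x\<in>\<Omega>. ((\<lambda>t. \<phi> x t) \<longlongrightarrow> \<infinity>) at_top) \<and>
     (\<exists>L\<ge>1. \<forall>x\<in>\<Omega>. \<forall>s t. 0 < s \<and> s \<le> t \<longrightarrow>
         \<phi> x s / ereal s \<le> ereal L * (\<phi> x t / ereal t))"

definition A0 :: "(real^'n::finite) set \<Rightarrow> (real^'n \<Rightarrow> real \<Rightarrow> ereal) \<Rightarrow> bool" where
  "A0 \<Omega> \<phi> \<longleftrightarrow> (\<exists>\<beta>. 0 < \<beta> \<and> \<beta> \<le> 1 \<and>
      (\<forall>x\<in>\<Omega>. \<phi> x \<beta> \<le> 1 \<and> 1 \<le> \<phi> x (1 / \<beta>)))"

definition conj_phi :: "(real^'n::finite \<Rightarrow> real \<Rightarrow> ereal) \<Rightarrow> real^'n \<Rightarrow> real \<Rightarrow> ereal" where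
  "conj_phi \<phi> x t = (SUP s\<in>{0..}. ereal (s * t) - \<phi> x s)"

text \<open>Luxemburg norm on Omega of a function given by its pointwise modulus g = |f|.\<close>
definition lux_norm ::
  "(real^'n::finite) set \<Rightarrow> (real^'n \<Rightarrow> real \<Rightarrow> ereal) \<Rightarrow> (real^'n \<Rightarrow> real) \<Rightarrow> ereal" where
  "lux_norm \<Omega> \<psi> g = Inf (ereal ` {l. l > 0 \<and>
      (\<integral>\<^sup>+ x\<in>\<Omega>. e2ennreal (\<psi> x (g x / l)) \<partial>lebesgue) \<le> 1})"

definition pd :: "'n::finite \<Rightarrow> (real^'n \<Rightarrow> real) \<Rightarrow> real^'n \<Rightarrow> real" where
  "pd j f x = frechet_derivative f (at x) (axis j 1)"

definition C1_on :: "(real^'n::finite) set \<Rightarrow> (real^'n \<Rightarrow> real) \<Rightarrow> bool" where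
  "C1_on U f \<longleftrightarrow> (\<forall>x\<in>U. f differentiable (at x)) \<and> (\<forall>j. continuous_on U (pd j f))"

definition C2_on :: "(real^'n::finite) set \<Rightarrow> (real^'n \<Rightarrow> real) \<Rightarrow> bool" where
  "C2_on U f \<longleftrightarrow> C1_on U f \<and> (\<forall>j. C1_on U (pd j f))"

definition C2c_sym :: "(real^'n::finite) set \<Rightarrow> (real^'n \<Rightarrow> real^'n^'n) set" where
  "C2c_sym \<Omega> = {\<psi>. (\<forall>i j. C2_on \<Omega> (\<lambda>x. \<psi> x $ i $ j)) \<and>
       (\<forall>x. transpose (\<psi> x) = \<psi> x) \<and>
       compact (closure {x. \<psi> x \<noteq> 0}) \<and> closure {x. \<psi> x \<noteq> 0} \<subseteq> \<Omega>}"

definition div1 :: "(real^'n::finite \<Rightarrow> real^'n^'n) \<Rightarrow> real^'n \<Rightarrow> real^'n" where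
  "div1 \<psi> x = (\<chi> i. \<Sum>j\<in>UNIV. pd j (\<lambda>y. \<psi> y $ i $ j) x)"

text \<open>div^2 psi = sum_{i,j} d_i d_j psi_ij (for symmetric C^2 fields this equals
  sum_i d_ii psi_ii + 2 sum_{i<j} d_ij psi_ij).\<close>
definition div2 :: "(real^'n::finite \<Rightarrow> real^'n^'n) \<Rightarrow> real^'n \<Rightarrow> real" where
  "div2 \<psi> x = (\<Sum>i\<in>UNIV. \<Sum>j\<in>UNIV. pd i (pd j (\<lambda>y. \<psi> y $ i $ j)) x)"

definition TGV ::
  "(real^'n::finite) set \<Rightarrow> (real^'n \<Rightarrow> real \<Rightarrow> ereal) \<Rightarrow> real \<Rightarrow> real \<Rightarrow> (real^'n \<Rightarrow> real) \<Rightarrow> ereal" where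
  "TGV \<Omega> \<phi> \<alpha>1 \<alpha>2 u = (SUP \<psi> \<in> {\<psi> \<in> C2c_sym \<Omega>.
        lux_norm \<Omega> (conj_phi \<phi>) (\<lambda>x. norm (\<psi> x)) \<le> ereal \<alpha>1 \<and>
        lux_norm \<Omega> (conj_phi \<phi>) (\<lambda>x. norm (div1 \<psi> x)) \<le> ereal \<alpha>2}.
      ereal (\<integral>x\<in>\<Omega>. u x * div2 \<psi> x \<partial>lebesgue))"

definition Lp :: "(real^'n::finite) set \<Rightarrow> real \<Rightarrow> (real^'n \<Rightarrow> real) set" where
  "Lp \<Omega> p = {u. u \<in> borel_measurable (lebesgue_on \<Omega>) \<and>
                 integrable (lebesgue_on \<Omega>) (\<lambda>x. \<bar>u x\<bar> powr p)}"

definition Lp_norm :: "(real^'n::finite) set \<Rightarrow> real \<Rightarrow> (real^'n \<Rightarrow> real) \<Rightarrow> real" where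
  "Lp_norm \<Omega> p u = (\<integral>x. \<bar>u x\<bar> powr p \<partial>lebesgue_on \<Omega>) powr (1 / p)"

definition weak_conv_Lp ::
  "(real^'n::finite) set \<Rightarrow> real \<Rightarrow> (nat \<Rightarrow> real^'n \<Rightarrow> real) \<Rightarrow> (real^'n \<Rightarrow> real) \<Rightarrow> bool" where
  "weak_conv_Lp \<Omega> p us u \<longleftrightarrow>
     (\<forall>g \<in> Lp \<Omega> (p / (p - 1)).
        (\<lambda>k. \<integral>x. us k x * g x \<partial>lebesgue_on \<Omega>) \<longlonglongrightarrow> (\<integral>x. u x * g x \<partial>lebesgue_on \<Omega>))"

text \<open>Bounded linear operator L^p(Omega) -> H (acting on representatives, compatible with
  a.e. equality).\<close>
definition bounded_linear_Lp ::
  "(real^'n::finite) set \<Rightarrow> real \<Rightarrow> ((real^'n \<Rightarrow> real) \<Rightarrow> 'h::real_normed_vector) \<Rightarrow> bool" where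
  "bounded_linear_Lp \<Omega> p K \<longleftrightarrow>
     (\<forall>u\<in>Lp \<Omega> p. \<forall>v\<in>Lp \<Omega> p. K (\<lambda>x. u x + v x) = K u + K v) \<and>
     (\<forall>u\<in>Lp \<Omega> p. \<forall>c. K (\<lambda>x. c * u x) = c *\<^sub>R K u) \<and>
     (\<forall>u\<in>Lp \<Omega> p. \<forall>v\<in>Lp \<Omega> p. (AE x in lebesgue_on \<Omega>. u x = v x) \<longrightarrow> K u = K v) \<and>
     (\<exists>C. \<forall>u\<in>Lp \<Omega> p. norm (K u) \<le> C * Lp_norm \<Omega> p u)"

definition affine_fns :: "(real^'n::finite \<Rightarrow> real) set" where
  "affine_fns = {(\<lambda>x. a \<bullet> x + b) | a b. True}"

definition injective_on_affine ::
  "(real^'n::finite) set \<Rightarrow> ((real^'n \<Rightarrow> real) \<Rightarrow> 'h) \<Rightarrow> bool" where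
  "injective_on_affine \<Omega> K \<longleftrightarrow>
     (\<forall>v\<in>affine_fns. \<forall>w\<in>affine_fns. K v = K w \<longrightarrow> (AE x in lebesgue_on \<Omega>. v x = w x))"

definition Gamma_conv_weak_Lp ::
  "(real^'n::finite) set \<Rightarrow> real \<Rightarrow> (nat \<Rightarrow> (real^'n \<Rightarrow> real) \<Rightarrow> ereal)
     \<Rightarrow> ((real^'n \<Rightarrow> real) \<Rightarrow> ereal) \<Rightarrow> bool" where
  "Gamma_conv_weak_Lp \<Omega> p F F0 \<longleftrightarrow>
     (\<forall>u\<in>Lp \<Omega> p.
        (\<forall>us. (\<forall>k. us k \<in> Lp \<Omega> p) \<and> weak_conv_Lp \<Omega> p us u \<longrightarrow>
              F0 u \<le> liminf (\<lambda>k. F k (us k))) \<and>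
        (\<exists>us. (\<forall>k. us k \<in> Lp \<Omega> p) \<and> weak_conv_Lp \<Omega> p us u \<and>
              limsup (\<lambda>k. F k (us k)) \<le> F0 u))"

end

theory Submission
  imports Defs
begin

text \<open>
  The fidelity terms converge pointwise, so constant sequences are recovery sequences, and the
  liminf inequality amounts to sequential weak lower semicontinuity of both terms (using
  \<open>f\<^sub>k \<rightarrow> f\<close> strongly).  \<open>TGV\<close> is a supremum of the functionals \<open>u \<mapsto> \<integral> u div\<^sup>2\<psi>\<close>, each
  weakly continuous because \<open>div\<^sup>2\<psi>\<close> is bounded.  For the residual, pairing \<open>K u\<^sub>k - f\<^sub>k\<close> with
  \<open>K u - f\<close> reduces the claim to weak-to-weak continuity of \<open>K\<close>, i.e. to representing every
  bounded linear functional \<open>l\<close> on \<open>L\<^sup>p\<close> by some \<open>g \<in> L\<^sup>q\<close>, \<open>q = p/(p-1)\<close>, the space against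
  which weak convergence is tested.  This \<open>g\<close> comes from Radon-Nikodym applied to the two
  variations of \<open>A \<mapsto> l(1\<^sub>A)\<close>, which are countably additive because
  \<open>\<bar>l(1\<^sub>A)\<bar> \<le> C |A|\<^sup>1\<^sup>/\<^sup>p\<close>.

  Only boundedness and openness of \<open>\<Omega>\<close>, \<open>\<phi> \<ge> 0\<close> and \<open>\<alpha>\<^sub>1, \<alpha>\<^sub>2 > 0\<close> are used.
\<close>

lemma bounded_measurable_in_Lp:
  fixes u :: "real^'n::finite \<Rightarrow> real"
  assumes \<Omega>: "\<Omega> \<in> lmeasurable" and um: "u \<in> borel_measurable (lebesgue_on \<Omega>)"
    and B: "\<And>x. x \<in> \<Omega> \<Longrightarrow> \<bar>u x\<bar> \<le> B" and p: "0 < p"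
  shows "u \<in> Lp \<Omega> p"
proof -
  interpret finite_measure "lebesgue_on \<Omega>" using finite_measure_lebesgue_on[OF \<Omega>] .
  have "integrable (lebesgue_on \<Omega>) (\<lambda>x. \<bar>u x\<bar> powr p)"
  proof (rule Bochner_Integration.integrable_bound)
    show "integrable (lebesgue_on \<Omega>) (\<lambda>x. \<bar>B\<bar> powr p)" by simp
    show "AE x in lebesgue_on \<Omega>. norm (\<bar>u x\<bar> powr p) \<le> norm (\<bar>B\<bar> powr p)"
      using B p by (intro AE_I2) (force intro: powr_mono2)
  qed (use um in measurable)
  then show ?thesis using um by (simp add: Lp_def)
qed

lemma dominated_in_Lp:
  fixes v w :: "real^'n::finite \<Rightarrow> real"
  assumes v: "v \<in> Lp \<Omega> p" and wm: "w \<in> borel_measurable (lebesgue_on \<Omega>)"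
    and dom: "\<And>x. x \<in> \<Omega> \<Longrightarrow> \<bar>w x\<bar> \<le> c * \<bar>v x\<bar>" and p: "0 < p"
  shows "w \<in> Lp \<Omega> p"
proof -
  have "integrable (lebesgue_on \<Omega>) (\<lambda>x. \<bar>w x\<bar> powr p)"
  proof (rule Bochner_Integration.integrable_bound)
    show "integrable (lebesgue_on \<Omega>) (\<lambda>x. \<bar>c\<bar> powr p * \<bar>v x\<bar> powr p)"
      using v by (simp add: Lp_def)
    have "\<bar>w x\<bar> powr p \<le> \<bar>c\<bar> powr p * \<bar>v x\<bar> powr p" if "x \<in> \<Omega>" for x
    proof -
      have "\<bar>w x\<bar> \<le> \<bar>c\<bar> * \<bar>v x\<bar>"
        using dom[OF that] by (meson abs_ge_self abs_ge_zero order_trans mult_right_mono)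
      then show ?thesis using p by (simp add: powr_mono2 flip: powr_mult)
    qed
    then show "AE x in lebesgue_on \<Omega>. norm (\<bar>w x\<bar> powr p) \<le> norm (\<bar>c\<bar> powr p * \<bar>v x\<bar> powr p)"
      by (intro AE_I2) auto
  qed (use wm in measurable)
  then show ?thesis using wm by (simp add: Lp_def)
qed

lemma Lp_times_Lq_integrable:
  fixes u g :: "real^'n::finite \<Rightarrow> real"
  assumes p: "1 < p" and u: "u \<in> Lp \<Omega> p" and g: "g \<in> Lp \<Omega> (p/(p-1))"
  shows "integrable (lebesgue_on \<Omega>) (\<lambda>x. u x * g x)"
proof -
  define q where "q = p/(p-1)"
  have q: "q > 1" "1/p + 1/q = 1" using p by (auto simp: q_def field_simps)
  show ?thesis
  proof (rule Bochner_Integration.integrable_bound)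
    show "integrable (lebesgue_on \<Omega>) (\<lambda>x. \<bar>u x\<bar> powr p / p + \<bar>g x\<bar> powr q / q)"
      using u g by (auto simp: Lp_def q_def)
    show "(\<lambda>x. u x * g x) \<in> borel_measurable (lebesgue_on \<Omega>)"
      using u g by (auto simp: Lp_def)
    have "\<bar>u x\<bar> * \<bar>g x\<bar> \<le> \<bar>u x\<bar> powr p / p + \<bar>g x\<bar> powr q / q" for x
      by (rule Youngs_inequality) (use p q in auto)
    then show "AE x in lebesgue_on \<Omega>. norm (u x * g x) \<le> norm (\<bar>u x\<bar> powr p / p + \<bar>g x\<bar> powr q / q)"
      by (intro AE_I2) (auto simp: abs_mult intro: order_trans[OF _ abs_ge_self])
  qed
qed

lemma Lp_norm_indicator:
  assumes "A \<in> sets (lebesgue_on \<Omega>)" "0 < p"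
  shows "Lp_norm \<Omega> p (indicator A) = measure (lebesgue_on \<Omega>) A powr (1/p)"
proof -
  have "(\<lambda>x. \<bar>indicator A x :: real\<bar> powr p) = indicator A"
    using assms(2) by (auto simp: indicator_def)
  moreover have "A \<inter> space (lebesgue_on \<Omega>) = A" using sets.sets_into_space[OF assms(1)] by auto
  ultimately show ?thesis by (simp add: Lp_norm_def)
qed

section \<open>Densities of dominated additive set functions\<close>

definition positive_variation :: "'a measure \<Rightarrow> ('a set \<Rightarrow> real) \<Rightarrow> 'a set \<Rightarrow> real" where
  "positive_variation M \<nu> A = (SUP B\<in>{B\<in>sets M. B \<subseteq> A}. \<nu> B)"

locale dominated_additive_set_function = finite_measure M
  for M :: "'a measure" and \<nu> :: "'a set \<Rightarrow> real" and C e :: real +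
  assumes additive: "\<And>A B. A \<in> sets M \<Longrightarrow> B \<in> sets M \<Longrightarrow> A \<inter> B = {} \<Longrightarrow> \<nu> (A \<union> B) = \<nu> A + \<nu> B"
    and dominated: "\<And>A. A \<in> sets M \<Longrightarrow> \<bar>\<nu> A\<bar> \<le> C * measure M A powr e"
    and constant_nonneg: "0 \<le> C" and exponent_pos: "0 < e"
begin

lemma empty: "\<nu> {} = 0"
  using additive[of "{}" "{}"] by simp

text \<open>Domination by \<open>measure M A powr e\<close> makes \<open>\<nu>\<close> continuous at \<open>{}\<close>.\<close>
lemma countably_additive_if_nonneg:
  assumes nonneg: "\<And>A. A \<in> sets M \<Longrightarrow> 0 \<le> \<nu> A"
  shows "countably_additive (sets M) (\<lambda>A. ennreal (\<nu> A))"
proof (rule sets.empty_continuous_imp_countably_additive)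
  show "positive (sets M) (\<lambda>A. ennreal (\<nu> A))" by (simp add: positive_def empty)
  show "additive (sets M) (\<lambda>A. ennreal (\<nu> A))"
    unfolding additive_def using additive nonneg by (simp flip: ennreal_plus)
  fix A :: "nat \<Rightarrow> 'a set" assume A: "range A \<subseteq> sets M" "decseq A" "(\<Inter>i. A i) = {}"
  have "(\<lambda>i. measure M (A i)) \<longlonglongrightarrow> 0"
    using finite_Lim_measure_decseq[OF A(1,2)] A(3) by simp
  then have bound_0: "(\<lambda>i. C * measure M (A i) powr e) \<longlonglongrightarrow> 0"
    by (rule tendsto_mult_right_zero[OF tendsto_zero_powrI]) (use exponent_pos in auto)
  have "(\<lambda>i. \<nu> (A i)) \<longlonglongrightarrow> 0"
    by (rule real_tendsto_sandwich[OF _ _ tendsto_const bound_0])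
      (use nonneg dominated A(1) in \<open>auto simp: abs_le_iff\<close>)
  then show "(\<lambda>i. ennreal (\<nu> (A i))) \<longlonglongrightarrow> 0"
    by (metis ennreal_0 tendsto_ennrealI)
qed simp

lemma nn_density_if_nonneg:
  assumes nonneg: "\<And>A. A \<in> sets M \<Longrightarrow> 0 \<le> \<nu> A"
  obtains f where "f \<in> borel_measurable M"
    and "\<And>A. A \<in> sets M \<Longrightarrow> ennreal (\<nu> A) = (\<integral>\<^sup>+x. f x * indicator A x \<partial>M)"
proof -
  define N where "N = measure_of (space M) (sets M) (\<lambda>A. ennreal (\<nu> A))"
  have sets_N: "sets N = sets M" unfolding N_def by (simp add: sets.space_closed)
  have emeasure_N: "emeasure N A = ennreal (\<nu> A)" if "A \<in> sets M" for A
    unfolding N_def using countably_additive_if_nonneg[OF nonneg] that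
    by (intro emeasure_measure_of_sigma sets.sigma_algebra_axioms) (auto simp: positive_def empty)
  have "absolutely_continuous M N"
    unfolding absolutely_continuous_def
  proof
    fix A assume "A \<in> null_sets M"
    then have A: "A \<in> sets M" "measure M A = 0" by (auto simp: measure_def)
    then have "\<nu> A = 0" using dominated[of A] exponent_pos by simp
    then show "A \<in> null_sets N" using A emeasure_N[of A] sets_N by (simp add: null_sets_def)
  qed
  then obtain f where fm: "f \<in> borel_measurable M" and fN: "density M f = N"
    using Radon_Nikodym[OF _ sets_N] by blast
  show ?thesis
  proof (rule that[OF fm])
    fix A assume "A \<in> sets M"
    then show "ennreal (\<nu> A) = (\<integral>\<^sup>+x. f x * indicator A x \<partial>M)"
      using fm emeasure_N by (simp flip: fN add: emeasure_density)
  qed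
qed

lemma density_if_nonneg:
  assumes nonneg: "\<And>A. A \<in> sets M \<Longrightarrow> 0 \<le> \<nu> A"
  shows "\<exists>r. integrable M r \<and> (\<forall>A\<in>sets M. \<nu> A = (\<integral>x. indicator A x * r x \<partial>M))"
proof -
  obtain f where fm: "f \<in> borel_measurable M"
    and f: "\<And>A. A \<in> sets M \<Longrightarrow> ennreal (\<nu> A) = (\<integral>\<^sup>+x. f x * indicator A x \<partial>M)"
    using nn_density_if_nonneg[OF nonneg] by blast
  have "(\<integral>\<^sup>+x. f x \<partial>M) = ennreal (\<nu> (space M))"
    using f[of "space M"] by (simp cong: nn_integral_cong)
  then have fin: "(\<integral>\<^sup>+x. f x \<partial>M) \<noteq> \<infinity>" by simp
  define r where "r x = enn2real (f x)" for x
  have fr: "AE x in M. f x = ennreal (r x)"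
    using nn_integral_PInf_AE[OF fm fin] by eventually_elim (auto simp: r_def less_top)
  have r_int: "integrable M r"
  proof (rule integrableI_bounded)
    show "r \<in> borel_measurable M" unfolding r_def using fm by measurable
    have "(\<integral>\<^sup>+x. ennreal (norm (r x)) \<partial>M) = (\<integral>\<^sup>+x. f x \<partial>M)"
      using fr by (intro nn_integral_cong_AE) (auto simp: r_def)
    then show "(\<integral>\<^sup>+x. ennreal (norm (r x)) \<partial>M) < \<infinity>" using fin by (simp add: less_top)
  qed
  have "\<nu> A = (\<integral>x. indicator A x * r x \<partial>M)" if A: "A \<in> sets M" for A
  proof -
    have "ennreal (\<nu> A) = (\<integral>\<^sup>+x. ennreal (indicator A x * r x) \<partial>M)"
      unfolding f[OF A] using fr
      by (intro nn_integral_cong_AE) (auto elim!: eventually_mono simp: indicator_def)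
    also have "\<dots> = ennreal (\<integral>x. indicator A x * r x \<partial>M)"
      using integrable_mult_indicator[OF A r_int]
      by (intro nn_integral_eq_integral) (auto simp: r_def)
    finally show ?thesis
      using nonneg[OF A] by (simp add: r_def)
  qed
  with r_int show ?thesis by blast
qed

lemma uminus: "dominated_additive_set_function M (\<lambda>A. - \<nu> A) C e"
  by unfold_locales (use additive dominated constant_nonneg exponent_pos in auto)

lemma le_bound_of_subset:
  assumes "B \<in> sets M" "A \<in> sets M" "B \<subseteq> A"
  shows "\<nu> B \<le> C * measure M A powr e"
proof -
  have "\<nu> B \<le> C * measure M B powr e" using dominated[OF assms(1)] by simp
  also have "\<dots> \<le> C * measure M A powr e"
    using assms constant_nonneg exponent_pos by (auto intro!: mult_left_mono powr_mono2 finite_measure_mono)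
  finally show ?thesis .
qed

lemma positive_variation_ge:
  assumes "B \<in> sets M" "B \<subseteq> A"
  shows "\<nu> B \<le> positive_variation M \<nu> A"
  unfolding positive_variation_def
proof (rule cSUP_upper)
  show "bdd_above (\<nu> ` {B\<in>sets M. B \<subseteq> A})"
    using le_bound_of_subset[OF _ sets.top] sets.sets_into_space
    by (intro bdd_aboveI2[where M="C * measure M (space M) powr e"]) auto
qed (use assms in auto)

lemma positive_variation_le:
  assumes "\<And>B. B \<in> sets M \<Longrightarrow> B \<subseteq> A \<Longrightarrow> \<nu> B \<le> z"
  shows "positive_variation M \<nu> A \<le> z"
  unfolding positive_variation_def by (rule cSUP_least) (use assms in auto)

lemma positive_variation_nonneg: "0 \<le> positive_variation M \<nu> A"
  using positive_variation_ge[of "{}" A] by (simp add: empty)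

lemma positive_variation_dominated:
  "A \<in> sets M \<Longrightarrow> positive_variation M \<nu> A \<le> C * measure M A powr e"
  by (rule positive_variation_le) (use le_bound_of_subset in auto)

lemma positive_variation_additive:
  assumes A: "A \<in> sets M" and B: "B \<in> sets M" and disj: "A \<inter> B = {}"
  shows "positive_variation M \<nu> (A \<union> B) = positive_variation M \<nu> A + positive_variation M \<nu> B"
proof (rule antisym)
  show "positive_variation M \<nu> (A \<union> B) \<le> positive_variation M \<nu> A + positive_variation M \<nu> B"
  proof (rule positive_variation_le)
    fix D assume D: "D \<in> sets M" "D \<subseteq> A \<union> B"
    have "D = (D \<inter> A) \<union> (D \<inter> B)" using D by auto
    then have "\<nu> D = \<nu> (D \<inter> A) + \<nu> (D \<inter> B)"
      using additive[of "D \<inter> A" "D \<inter> B"] D A B disj by auto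
    also have "\<dots> \<le> positive_variation M \<nu> A + positive_variation M \<nu> B"
      using D A B by (intro add_mono positive_variation_ge) auto
    finally show "\<nu> D \<le> positive_variation M \<nu> A + positive_variation M \<nu> B" .
  qed
  have "\<nu> D1 + \<nu> D2 \<le> positive_variation M \<nu> (A \<union> B)"
    if "D1 \<in> sets M" "D1 \<subseteq> A" "D2 \<in> sets M" "D2 \<subseteq> B" for D1 D2
  proof -
    have "D1 \<inter> D2 = {}" using that disj by blast
    then have "\<nu> D1 + \<nu> D2 = \<nu> (D1 \<union> D2)" using additive[of D1 D2] that by simp
    also have "\<dots> \<le> positive_variation M \<nu> (A \<union> B)" using that by (intro positive_variation_ge) auto
    finally show ?thesis .
  qed
  then have "\<nu> D2 \<le> positive_variation M \<nu> (A \<union> B) - positive_variation M \<nu> A"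
    if "D2 \<in> sets M" "D2 \<subseteq> B" for D2
    using positive_variation_le[of A "positive_variation M \<nu> (A \<union> B) - \<nu> D2"] that by force
  then have "positive_variation M \<nu> B \<le> positive_variation M \<nu> (A \<union> B) - positive_variation M \<nu> A"
    by (rule positive_variation_le)
  then show "positive_variation M \<nu> A + positive_variation M \<nu> B \<le> positive_variation M \<nu> (A \<union> B)"
    by simp
qed

lemma dominated_additive_positive_variation: "dominated_additive_set_function M (positive_variation M \<nu>) C e"
proof unfold_locales
  fix A assume "A \<in> sets M"
  then show "\<bar>positive_variation M \<nu> A\<bar> \<le> C * measure M A powr e"
    using positive_variation_dominated positive_variation_nonneg by simp
qed (use positive_variation_additive constant_nonneg exponent_pos in auto)

lemma Jordan_decomposition:
  assumes A: "A \<in> sets M"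
  shows "\<nu> A = positive_variation M \<nu> A - positive_variation M (\<lambda>A. - \<nu> A) A"
proof -
  interpret neg: dominated_additive_set_function M "\<lambda>A. - \<nu> A" C e by (rule uminus)
  have split: "\<nu> A = \<nu> B + \<nu> (A - B)" if "B \<in> sets M" "B \<subseteq> A" for B
    using additive[of B "A - B"] that A by (simp add: Un_absorb1)
  have "positive_variation M (\<lambda>A. - \<nu> A) A \<le> positive_variation M \<nu> A - \<nu> A"
  proof (rule neg.positive_variation_le)
    fix B assume B: "B \<in> sets M" "B \<subseteq> A"
    then have "\<nu> (A - B) \<le> positive_variation M \<nu> A" using A by (intro positive_variation_ge) auto
    then show "- \<nu> B \<le> positive_variation M \<nu> A - \<nu> A" using split[OF B] by linarith
  qed
  moreover have "positive_variation M \<nu> A \<le> positive_variation M (\<lambda>A. - \<nu> A) A + \<nu> A"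
  proof (rule positive_variation_le)
    fix B assume B: "B \<in> sets M" "B \<subseteq> A"
    then have "- \<nu> (A - B) \<le> positive_variation M (\<lambda>A. - \<nu> A) A"
      using A by (intro neg.positive_variation_ge) auto
    then show "\<nu> B \<le> positive_variation M (\<lambda>A. - \<nu> A) A + \<nu> A" using split[OF B] by linarith
  qed
  ultimately show ?thesis by linarith
qed

lemma has_density: "\<exists>g. integrable M g \<and> (\<forall>A\<in>sets M. \<nu> A = (\<integral>x. indicator A x * g x \<partial>M))"
proof -
  interpret neg: dominated_additive_set_function M "\<lambda>A. - \<nu> A" C e by (rule uminus)
  interpret pos_var: dominated_additive_set_function M "positive_variation M \<nu>" C e
    by (rule dominated_additive_positive_variation)
  interpret neg_var: dominated_additive_set_function M "positive_variation M (\<lambda>A. - \<nu> A)" C e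
    by (rule neg.dominated_additive_positive_variation)
  obtain r1 where r1: "integrable M r1"
    "\<And>A. A \<in> sets M \<Longrightarrow> positive_variation M \<nu> A = (\<integral>x. indicator A x * r1 x \<partial>M)"
    using pos_var.density_if_nonneg positive_variation_nonneg by blast
  obtain r2 where r2: "integrable M r2"
    "\<And>A. A \<in> sets M \<Longrightarrow> positive_variation M (\<lambda>A. - \<nu> A) A = (\<integral>x. indicator A x * r2 x \<partial>M)"
    using neg_var.density_if_nonneg neg.positive_variation_nonneg by blast
  have "\<nu> A = (\<integral>x. indicator A x * (r1 x - r2 x) \<partial>M)" if A: "A \<in> sets M" for A
    using Jordan_decomposition[OF A] r1 r2 integrable_mult_indicator[OF A r1(1)]
      integrable_mult_indicator[OF A r2(1)] A
    by (simp add: right_diff_distrib)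
  moreover have "integrable M (\<lambda>x. r1 x - r2 x)" using r1(1) r2(1) by simp
  ultimately show ?thesis by blast
qed
end

section \<open>The dual of \<open>L\<^sup>p\<close>\<close>

lemma integrable_bounded_times:
  fixes v g :: "'a \<Rightarrow> real"
  assumes g: "integrable M g" and v: "v \<in> borel_measurable M" and B: "\<And>x. x \<in> space M \<Longrightarrow> \<bar>v x\<bar> \<le> B"
  shows "integrable M (\<lambda>x. v x * g x)"
proof (rule Bochner_Integration.integrable_bound)
  show "integrable M (\<lambda>x. B * \<bar>g x\<bar>)" using g by simp
  show "AE x in M. norm (v x * g x) \<le> norm (B * \<bar>g x\<bar>)"
    using B by (intro AE_I2) (force simp: abs_mult intro: mult_right_mono)
qed (use g v in measurable)

lemma simple_function_in_Lp:
  fixes s :: "real^'n::finite \<Rightarrow> real"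
  assumes \<Omega>: "\<Omega> \<in> lmeasurable" and s: "simple_function (lebesgue_on \<Omega>) s" and p: "0 < p"
  shows "s \<in> Lp \<Omega> p"
proof (rule bounded_measurable_in_Lp[OF \<Omega> borel_measurable_simple_function[OF s] _ p])
  fix x assume "x \<in> \<Omega>"
  then show "\<bar>s x\<bar> \<le> (\<Sum>y\<in>s ` \<Omega>. \<bar>y\<bar>)"
    using simple_functionD(1)[OF s] by (intro member_le_sum) auto
qed

lemma bounded_linear_Lp_add:
  "bounded_linear_Lp \<Omega> p K \<Longrightarrow> u \<in> Lp \<Omega> p \<Longrightarrow> v \<in> Lp \<Omega> p \<Longrightarrow> K (\<lambda>x. u x + v x) = K u + K v"
  unfolding bounded_linear_Lp_def by blast

lemma bounded_linear_Lp_scale: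
  "bounded_linear_Lp \<Omega> p K \<Longrightarrow> u \<in> Lp \<Omega> p \<Longrightarrow> K (\<lambda>x. c * u x) = c *\<^sub>R K u"
  unfolding bounded_linear_Lp_def by blast

lemma bounded_linear_Lp_AE_cong:
  "bounded_linear_Lp \<Omega> p K \<Longrightarrow> u \<in> Lp \<Omega> p \<Longrightarrow> v \<in> Lp \<Omega> p \<Longrightarrow>
    (AE x in lebesgue_on \<Omega>. u x = v x) \<Longrightarrow> K u = K v"
  unfolding bounded_linear_Lp_def by blast

lemma bounded_linear_Lp_bound:
  assumes "bounded_linear_Lp \<Omega> p K"
  obtains C where "0 \<le> C" "\<And>u. u \<in> Lp \<Omega> p \<Longrightarrow> norm (K u) \<le> C * Lp_norm \<Omega> p u"
proof -
  obtain C where C: "\<And>u. u \<in> Lp \<Omega> p \<Longrightarrow> norm (K u) \<le> C * Lp_norm \<Omega> p u"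
    using assms unfolding bounded_linear_Lp_def by blast
  have C_le: "C * Lp_norm \<Omega> p u \<le> max C 0 * Lp_norm \<Omega> p u" for u
    by (rule mult_right_mono) (simp_all add: Lp_norm_def)
  have bound: "norm (K u) \<le> max C 0 * Lp_norm \<Omega> p u" if "u \<in> Lp \<Omega> p" for u
    using C[OF that] C_le by (rule order_trans)
  show ?thesis
  proof (rule that)
    show "0 \<le> max C 0" by simp
  qed (rule bound)
qed

lemma bounded_linear_Lp_inner:
  assumes K: "bounded_linear_Lp \<Omega> p K"
  shows "bounded_linear_Lp \<Omega> p (\<lambda>u. inner h (K u))"
  unfolding bounded_linear_Lp_def
proof (intro conjI ballI allI impI)
  fix u v assume uv: "u \<in> Lp \<Omega> p" "v \<in> Lp \<Omega> p"
  from bounded_linear_Lp_add[OF K uv]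
  show "inner h (K (\<lambda>x. u x + v x)) = inner h (K u) + inner h (K v)"
    by (simp add: inner_add_right)
next
  fix u c assume "u \<in> Lp \<Omega> p"
  from bounded_linear_Lp_scale[OF K this, of c]
  show "inner h (K (\<lambda>x. c * u x)) = c *\<^sub>R inner h (K u)"
    by simp
next
  fix u v assume "u \<in> Lp \<Omega> p" "v \<in> Lp \<Omega> p" "AE x in lebesgue_on \<Omega>. u x = v x"
  from bounded_linear_Lp_AE_cong[OF K this]
  show "inner h (K u) = inner h (K v)"
    by simp
next
  obtain C where C: "\<And>u. u \<in> Lp \<Omega> p \<Longrightarrow> norm (K u) \<le> C * Lp_norm \<Omega> p u"
    using bounded_linear_Lp_bound[OF K] by blast
  have "norm (inner h (K u)) \<le> (norm h * C) * Lp_norm \<Omega> p u" if "u \<in> Lp \<Omega> p" for u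
  proof -
    have "norm (inner h (K u)) \<le> norm h * norm (K u)"
      unfolding real_norm_def by (rule Cauchy_Schwarz_ineq2)
    also have "\<dots> \<le> norm h * (C * Lp_norm \<Omega> p u)"
      by (rule mult_left_mono[OF C[OF that] norm_ge_zero])
    finally show ?thesis
      by (simp only: mult.assoc)
  qed
  then show "\<exists>C. \<forall>u\<in>Lp \<Omega> p. norm (inner h (K u)) \<le> C * Lp_norm \<Omega> p u"
    by blast
qed

lemma bounded_linear_Lp_indicator_density:
  fixes lf :: "(real^'n::finite \<Rightarrow> real) \<Rightarrow> real"
  assumes lf: "bounded_linear_Lp \<Omega> p lf" and \<Omega>: "\<Omega> \<in> lmeasurable" and p: "0 < p"
  shows "\<exists>g. integrable (lebesgue_on \<Omega>) g \<and>
    (\<forall>A\<in>sets (lebesgue_on \<Omega>). lf (indicator A) = (\<integral>x. indicator A x * g x \<partial>lebesgue_on \<Omega>))"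
proof -
  obtain C where C: "0 \<le> C" "\<And>u. u \<in> Lp \<Omega> p \<Longrightarrow> \<bar>lf u\<bar> \<le> C * Lp_norm \<Omega> p u"
    using bounded_linear_Lp_bound[OF lf] unfolding real_norm_def by blast
  have ind_Lp: "indicator A \<in> Lp \<Omega> p" if "A \<in> sets (lebesgue_on \<Omega>)" for A
    using that by (intro bounded_measurable_in_Lp[OF \<Omega> _ _ p, where B=1]) (auto simp: indicator_def)
  interpret dominated_additive_set_function "lebesgue_on \<Omega>" "\<lambda>A. lf (indicator A)" C "1/p"
  proof (intro dominated_additive_set_function.intro dominated_additive_set_function_axioms.intro
      finite_measure_lebesgue_on[OF \<Omega>])
    fix A B assume AB: "A \<in> sets (lebesgue_on \<Omega>)" "B \<in> sets (lebesgue_on \<Omega>)" "A \<inter> B = {}"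
    then have "indicator (A \<union> B) = (\<lambda>x. indicator A x + indicator B x :: real)"
      by (auto simp: indicator_def fun_eq_iff)
    then show "lf (indicator (A \<union> B)) = lf (indicator A) + lf (indicator B)"
      using bounded_linear_Lp_add[OF lf ind_Lp ind_Lp] AB by simp
  next
    fix A assume A: "A \<in> sets (lebesgue_on \<Omega>)"
    show "\<bar>lf (indicator A)\<bar> \<le> C * measure (lebesgue_on \<Omega>) A powr (1/p)"
      using C(2)[OF ind_Lp[OF A]] by (simp add: Lp_norm_indicator[OF A p])
  qed (use C p in auto)
  show ?thesis by (rule has_density)
qed

lemma bounded_linear_Lp_simple_function_eq:
  fixes lf :: "(real^'n::finite \<Rightarrow> real) \<Rightarrow> real"
  assumes lf: "bounded_linear_Lp \<Omega> p lf" and \<Omega>: "\<Omega> \<in> lmeasurable" and p: "0 < p"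
    and g: "integrable (lebesgue_on \<Omega>) g"
    and ind: "\<And>A. A \<in> sets (lebesgue_on \<Omega>) \<Longrightarrow>
      lf (indicator A) = (\<integral>x. indicator A x * g x \<partial>lebesgue_on \<Omega>)"
    and s: "simple_function (lebesgue_on \<Omega>) s"
  shows "lf s = (\<integral>x. s x * g x \<partial>lebesgue_on \<Omega>)"
proof -
  interpret finite_measure "lebesgue_on \<Omega>" by (rule finite_measure_lebesgue_on[OF \<Omega>])
  note in_Lp = simple_function_in_Lp[OF \<Omega> _ p]
  have times_g: "integrable (lebesgue_on \<Omega>) (\<lambda>x. f x * g x)" if "simple_function (lebesgue_on \<Omega>) f" for f
    using that simple_functionD(1)[OF that] g
    by (intro integrable_bounded_times[where B="\<Sum>y\<in>f ` \<Omega>. \<bar>y\<bar>"] borel_measurable_simple_function)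
      (auto intro!: member_le_sum)
  have "emeasure (lebesgue_on \<Omega>) {y \<in> space (lebesgue_on \<Omega>). s y \<noteq> 0} \<noteq> \<infinity>"
    by (simp add: emeasure_finite)
  with s show ?thesis
  proof (induct s rule: integrable_simple_function_induct)
    case (cong f h)
    have "lf f = lf h"
      by (rule bounded_linear_Lp_AE_cong[OF lf in_Lp in_Lp]) (use cong in \<open>auto intro!: AE_I2\<close>)
    moreover have "(\<integral>x. f x * g x \<partial>lebesgue_on \<Omega>) = (\<integral>x. h x * g x \<partial>lebesgue_on \<Omega>)"
      using cong by (intro Bochner_Integration.integral_cong) auto
    ultimately show ?case using cong by simp
  next
    case (indicator A y)
    then have "indicator A \<in> Lp \<Omega> p"
      by (intro in_Lp) (auto intro: simple_function_indicator)
    then show ?case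
      using bounded_linear_Lp_scale[OF lf, of "indicator A" y] ind[OF indicator(1)]
      by (simp add: mult.commute mult.left_commute)
  next
    case (add f h)
    then show ?case
      using bounded_linear_Lp_add[OF lf in_Lp in_Lp] times_g
      by (simp add: distrib_right)
  qed
qed

lemma Lp_simple_approximation:
  fixes v :: "real^'n::finite \<Rightarrow> real"
  assumes v: "v \<in> Lp \<Omega> p" and p: "0 < p"
  obtains s where "\<And>i. simple_function (lebesgue_on \<Omega>) (s i)"
    and "\<And>i x. x \<in> \<Omega> \<Longrightarrow> \<bar>s i x\<bar> \<le> 2 * \<bar>v x\<bar>"
    and "\<And>x. x \<in> \<Omega> \<Longrightarrow> (\<lambda>i. s i x) \<longlonglongrightarrow> v x"
    and "(\<lambda>i. Lp_norm \<Omega> p (\<lambda>x. v x - s i x)) \<longlonglongrightarrow> 0"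
proof -
  define M where "M = lebesgue_on \<Omega>"
  have vm: "v \<in> borel_measurable M" and vi: "integrable M (\<lambda>x. \<bar>v x\<bar> powr p)"
    using v by (auto simp: Lp_def M_def)
  obtain s where s: "\<And>i. simple_function M (s i)"
    and s_lim: "\<And>x. x \<in> space M \<Longrightarrow> (\<lambda>i. s i x) \<longlonglongrightarrow> v x"
    and s_le: "\<And>i x. x \<in> space M \<Longrightarrow> \<bar>s i x\<bar> \<le> 2 * \<bar>v x\<bar>"
    using borel_measurable_implies_sequence_metric[OF vm, of 0] by (auto simp: dist_real_def) blast
  have "(\<lambda>i. \<integral>x. \<bar>v x - s i x\<bar> powr p \<partial>M) \<longlonglongrightarrow> (\<integral>x. 0 \<partial>M)"
  proof (rule integral_dominated_convergence[where w="\<lambda>x. 3 powr p * \<bar>v x\<bar> powr p"])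
    show "(\<lambda>x. \<bar>v x - s i x\<bar> powr p) \<in> borel_measurable M" for i
      using vm borel_measurable_simple_function[OF s] by measurable
    show "integrable M (\<lambda>x. 3 powr p * \<bar>v x\<bar> powr p)" using vi by simp
    show "AE x in M. (\<lambda>i. \<bar>v x - s i x\<bar> powr p) \<longlonglongrightarrow> 0"
    proof (rule AE_I2)
      fix x assume x: "x \<in> space M"
      have "(\<lambda>i. \<bar>v x - s i x\<bar>) \<longlonglongrightarrow> \<bar>v x - v x\<bar>"
        by (intro tendsto_intros s_lim[OF x])
      then show "(\<lambda>i. \<bar>v x - s i x\<bar> powr p) \<longlonglongrightarrow> 0"
        by (intro tendsto_zero_powrI[OF _ tendsto_const]) (use p in auto)
    qed
    show "AE x in M. norm (\<bar>v x - s i x\<bar> powr p) \<le> 3 powr p * \<bar>v x\<bar> powr p" for i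
    proof (rule AE_I2)
      fix x assume "x \<in> space M"
      then have "\<bar>v x - s i x\<bar> \<le> 3 * \<bar>v x\<bar>" using s_le[of x i] by linarith
      then show "norm (\<bar>v x - s i x\<bar> powr p) \<le> 3 powr p * \<bar>v x\<bar> powr p"
        using p by (simp add: powr_mono2 flip: powr_mult)
    qed
  qed simp
  then have "(\<lambda>i. Lp_norm \<Omega> p (\<lambda>x. v x - s i x)) \<longlonglongrightarrow> 0"
    unfolding Lp_norm_def M_def[symmetric] by (intro tendsto_zero_powrI[OF _ tendsto_const]) (use p in auto)
  with s s_lim s_le show ?thesis by (intro that) (auto simp: M_def)
qed

lemma bounded_linear_Lp_tendsto:
  assumes K: "bounded_linear_Lp \<Omega> p K" and v: "v \<in> Lp \<Omega> p" and w: "\<And>i. w i \<in> Lp \<Omega> p"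
    and diff: "\<And>i. (\<lambda>x. v x - w i x) \<in> Lp \<Omega> p"
    and Lp_lim: "(\<lambda>i. Lp_norm \<Omega> p (\<lambda>x. v x - w i x)) \<longlonglongrightarrow> 0"
  shows "(\<lambda>i. K (w i)) \<longlonglongrightarrow> K v"
proof -
  obtain C where C: "\<And>u. u \<in> Lp \<Omega> p \<Longrightarrow> norm (K u) \<le> C * Lp_norm \<Omega> p u"
    using bounded_linear_Lp_bound[OF K] by blast
  have "eventually (\<lambda>i. norm (K (\<lambda>x. v x - w i x)) \<le> C * Lp_norm \<Omega> p (\<lambda>x. v x - w i x)) sequentially"
    using C[OF diff] by simp
  then have "(\<lambda>i. K (\<lambda>x. v x - w i x)) \<longlonglongrightarrow> 0"
    by (rule Lim_null_comparison) (rule tendsto_mult_right_zero[OF Lp_lim])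
  then have "(\<lambda>i. K v - K (\<lambda>x. v x - w i x)) \<longlonglongrightarrow> K v - 0"
    by (intro tendsto_diff tendsto_const)
  moreover have "K (w i) = K v - K (\<lambda>x. v x - w i x)" for i
    using bounded_linear_Lp_add[OF K diff[of i] w[of i]] by simp
  ultimately show ?thesis
    by simp
qed

lemma bounded_linear_Lp_eq_integral_if_simple:
  fixes lf :: "(real^'n::finite \<Rightarrow> real) \<Rightarrow> real"
  assumes lf: "bounded_linear_Lp \<Omega> p lf" and \<Omega>: "\<Omega> \<in> lmeasurable" and p: "0 < p"
    and simple: "\<And>s. simple_function (lebesgue_on \<Omega>) s \<Longrightarrow> lf s = (\<integral>x. s x * g x \<partial>lebesgue_on \<Omega>)"
    and v: "v \<in> Lp \<Omega> p" and gm: "g \<in> borel_measurable (lebesgue_on \<Omega>)"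
    and dom: "integrable (lebesgue_on \<Omega>) (\<lambda>x. \<bar>v x\<bar> * \<bar>g x\<bar>)"
  shows "lf v = (\<integral>x. v x * g x \<partial>lebesgue_on \<Omega>)"
proof -
  obtain s where s: "\<And>i. simple_function (lebesgue_on \<Omega>) (s i)"
    and s_le: "\<And>i x. x \<in> \<Omega> \<Longrightarrow> \<bar>s i x\<bar> \<le> 2 * \<bar>v x\<bar>"
    and s_lim: "\<And>x. x \<in> \<Omega> \<Longrightarrow> (\<lambda>i. s i x) \<longlonglongrightarrow> v x"
    and Lp_lim: "(\<lambda>i. Lp_norm \<Omega> p (\<lambda>x. v x - s i x)) \<longlonglongrightarrow> 0"
    using Lp_simple_approximation[OF v p] by blast
  have diff_Lp: "(\<lambda>x. v x - s i x) \<in> Lp \<Omega> p" for i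
  proof (rule dominated_in_Lp[OF v _ _ p, where c=3])
    show "(\<lambda>x. v x - s i x) \<in> borel_measurable (lebesgue_on \<Omega>)"
      using v borel_measurable_simple_function[OF s] by (auto simp: Lp_def)
    show "\<bar>v x - s i x\<bar> \<le> 3 * \<bar>v x\<bar>" if "x \<in> \<Omega>" for x
      using s_le[OF that, of i] by linarith
  qed
  have lf_lim: "(\<lambda>i. lf (s i)) \<longlonglongrightarrow> lf v"
    using simple_function_in_Lp[OF \<Omega> s p] diff_Lp Lp_lim by (rule bounded_linear_Lp_tendsto[OF lf v])
  have "(\<lambda>i. \<integral>x. s i x * g x \<partial>lebesgue_on \<Omega>) \<longlonglongrightarrow> (\<integral>x. v x * g x \<partial>lebesgue_on \<Omega>)"
  proof (rule integral_dominated_convergence[where w="\<lambda>x. 2 * (\<bar>v x\<bar> * \<bar>g x\<bar>)"])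
    show "(\<lambda>x. v x * g x) \<in> borel_measurable (lebesgue_on \<Omega>)" using v gm by (auto simp: Lp_def)
    show "(\<lambda>x. s i x * g x) \<in> borel_measurable (lebesgue_on \<Omega>)" for i
      using borel_measurable_simple_function[OF s] gm by measurable
    show "integrable (lebesgue_on \<Omega>) (\<lambda>x. 2 * (\<bar>v x\<bar> * \<bar>g x\<bar>))" using dom by simp
    show "AE x in lebesgue_on \<Omega>. (\<lambda>i. s i x * g x) \<longlonglongrightarrow> v x * g x"
      using s_lim by (intro AE_I2 tendsto_mult tendsto_const) auto
    show "AE x in lebesgue_on \<Omega>. norm (s i x * g x) \<le> 2 * (\<bar>v x\<bar> * \<bar>g x\<bar>)" for i
    proof (rule AE_I2)
      fix x assume "x \<in> space (lebesgue_on \<Omega>)"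
      then have "\<bar>s i x\<bar> * \<bar>g x\<bar> \<le> (2 * \<bar>v x\<bar>) * \<bar>g x\<bar>"
        using s_le by (intro mult_right_mono) auto
      then show "norm (s i x * g x) \<le> 2 * (\<bar>v x\<bar> * \<bar>g x\<bar>)"
        by (simp add: abs_mult)
    qed
  qed
  then have "(\<lambda>i. lf (s i)) \<longlonglongrightarrow> (\<integral>x. v x * g x \<partial>lebesgue_on \<Omega>)"
    by (simp add: simple[OF s])
  with lf_lim show ?thesis by (rule LIMSEQ_unique)
qed

lemma Lp_if_truncations_bounded:
  fixes g :: "real^'n::finite \<Rightarrow> real"
  assumes \<Omega>: "\<Omega> \<in> lmeasurable" and gm: "g \<in> borel_measurable (lebesgue_on \<Omega>)" and q: "0 < q"
    and bound: "\<And>N::nat. (\<integral>x. (if \<bar>g x\<bar> \<le> N then \<bar>g x\<bar> powr q else 0) \<partial>lebesgue_on \<Omega>) \<le> B"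
  shows "g \<in> Lp \<Omega> q"
proof -
  interpret finite_measure "lebesgue_on \<Omega>" by (rule finite_measure_lebesgue_on[OF \<Omega>])
  define t where "t N x = (if \<bar>g x\<bar> \<le> real N then \<bar>g x\<bar> powr q else 0)" for N x
  have t_int: "integrable (lebesgue_on \<Omega>) (t N)" for N
  proof (rule Bochner_Integration.integrable_bound[where f="\<lambda>x. real N powr q"])
    show "t N \<in> borel_measurable (lebesgue_on \<Omega>)" unfolding t_def using gm by measurable
    show "AE x in lebesgue_on \<Omega>. norm (t N x) \<le> norm (real N powr q)"
      using q by (intro AE_I2) (auto simp: t_def intro: powr_mono2)
  qed simp
  have t_mono: "t N x \<le> t N' x" if "N \<le> N'" for N N' x
    using that by (auto simp: t_def)
  have "integrable (lebesgue_on \<Omega>) (\<lambda>x. \<bar>g x\<bar> powr q)"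
  proof (rule integrable_monotone_convergence[where f=t and x="SUP N. \<integral>x. t N x \<partial>lebesgue_on \<Omega>"])
    show "AE x in lebesgue_on \<Omega>. mono (\<lambda>N. t N x)" by (intro AE_I2 monoI t_mono)
    show "AE x in lebesgue_on \<Omega>. (\<lambda>N. t N x) \<longlonglongrightarrow> \<bar>g x\<bar> powr q"
    proof (intro AE_I2 tendsto_eventually)
      fix x
      obtain N0 :: nat where "\<bar>g x\<bar> \<le> real N0" using real_arch_simple by blast
      then show "\<forall>\<^sub>F N in sequentially. t N x = \<bar>g x\<bar> powr q"
        unfolding eventually_sequentially by (intro exI[of _ N0]) (auto simp: t_def)
    qed
    have "incseq (\<lambda>N. \<integral>x. t N x \<partial>lebesgue_on \<Omega>)"
      by (intro incseq_SucI integral_mono t_int t_mono) simp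
    then show "(\<lambda>N. \<integral>x. t N x \<partial>lebesgue_on \<Omega>) \<longlonglongrightarrow> (SUP N. \<integral>x. t N x \<partial>lebesgue_on \<Omega>)"
      using bound by (intro LIMSEQ_incseq_SUP bdd_aboveI2[where M=B]) (auto simp: t_def)
  qed (use t_int gm in measurable)
  then show ?thesis using gm by (simp add: Lp_def)
qed

lemma le_powr_if_le_mult_powr:
  fixes I C p q :: real
  assumes I: "0 \<le> I" "I \<le> C * I powr (1/p)" and C: "0 \<le> C" and pq: "1/p + 1/q = 1" and q: "0 < q"
  shows "I \<le> C powr q"
proof (cases "I = 0")
  case False
  then have I_pos: "0 < I" using I(1) by simp
  have "I powr (1/q) * I powr (1/p) \<le> C * I powr (1/p)"
    using I(2) I_pos pq by (simp flip: powr_add add: add.commute)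
  then have "I powr (1/q) \<le> C" using I_pos by simp
  then have "(I powr (1/q)) powr q \<le> C powr q" using q by (intro powr_mono2) auto
  then show ?thesis using I_pos q by (simp add: powr_powr)
qed simp

lemma Lq_if_dual_bound:
  fixes g :: "real^'n::finite \<Rightarrow> real"
  assumes \<Omega>: "\<Omega> \<in> lmeasurable" and p: "1 < p" and g: "integrable (lebesgue_on \<Omega>) g" and C: "0 \<le> C"
    and bound: "\<And>v B. v \<in> borel_measurable (lebesgue_on \<Omega>) \<Longrightarrow> (\<And>x. \<bar>v x\<bar> \<le> B) \<Longrightarrow>
      (\<integral>x. v x * g x \<partial>lebesgue_on \<Omega>) \<le> C * Lp_norm \<Omega> p v"
  shows "g \<in> Lp \<Omega> (p/(p-1))"
proof -
  define q where "q = p/(p-1)"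
  have q: "1 < q" "(q - 1) * p = q" "1/p + 1/q = 1"
    using p by (auto simp: q_def field_simps)
  have gm: "g \<in> borel_measurable (lebesgue_on \<Omega>)" using g by simp
  define t where "t N x = (if \<bar>g x\<bar> \<le> real N then \<bar>g x\<bar> powr q else 0)" for N :: nat and x
  define v where "v N x = (if \<bar>g x\<bar> \<le> real N then sgn (g x) * \<bar>g x\<bar> powr (q - 1) else 0)" for N :: nat and x
  have v_times_g: "v N x * g x = t N x" for N x
  proof (cases "g x = 0")
    case False
    have "v N x * g x = (if \<bar>g x\<bar> \<le> real N then \<bar>g x\<bar> powr (q - 1) * \<bar>g x\<bar> powr 1 else 0)"
      by (auto simp: v_def sgn_if)
    then show ?thesis using False powr_add[of "\<bar>g x\<bar>" "q - 1" 1] by (simp add: t_def)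
  qed (simp add: v_def t_def)
  have v_pow: "\<bar>v N x\<bar> powr p = t N x" for N x
    using p q by (auto simp: v_def t_def abs_mult abs_sgn_eq powr_powr)
  have "(\<integral>x. t N x \<partial>lebesgue_on \<Omega>) \<le> C powr q" for N
  proof -
    define I where "I = (\<integral>x. t N x \<partial>lebesgue_on \<Omega>)"
    have v_bounded: "\<bar>v N x\<bar> \<le> real N powr (q - 1)" for x
      using q by (auto simp: v_def abs_mult abs_sgn_eq intro: powr_mono2)
    have "I = (\<integral>x. v N x * g x \<partial>lebesgue_on \<Omega>)" by (simp add: I_def v_times_g)
    also have "\<dots> \<le> C * Lp_norm \<Omega> p (v N)"
      by (rule bound[OF _ v_bounded]) (unfold v_def, use gm in measurable)
    also have "\<dots> = C * I powr (1/p)" by (simp add: Lp_norm_def v_pow I_def)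
    finally have "I \<le> C * I powr (1/p)" .
    moreover have "0 \<le> I" by (simp add: I_def t_def)
    ultimately show ?thesis
      using C q by (simp add: le_powr_if_le_mult_powr I_def)
  qed
  then show ?thesis
    unfolding q_def[symmetric] using q(1) by (intro Lp_if_truncations_bounded[OF \<Omega> gm]) (auto simp: t_def)
qed

theorem Lp_dual_representation:
  fixes lf :: "(real^'n::finite \<Rightarrow> real) \<Rightarrow> real"
  assumes lf: "bounded_linear_Lp \<Omega> p lf" and \<Omega>: "\<Omega> \<in> lmeasurable" and p: "1 < p"
  obtains g where "g \<in> Lp \<Omega> (p/(p-1))" and "\<And>u. u \<in> Lp \<Omega> p \<Longrightarrow> lf u = (\<integral>x. u x * g x \<partial>lebesgue_on \<Omega>)"
proof -
  have p0: "0 < p" using p by simp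
  obtain C where C: "0 \<le> C" "\<And>u. u \<in> Lp \<Omega> p \<Longrightarrow> \<bar>lf u\<bar> \<le> C * Lp_norm \<Omega> p u"
    using bounded_linear_Lp_bound[OF lf] unfolding real_norm_def by blast
  obtain g where g: "integrable (lebesgue_on \<Omega>) g"
    and ind: "\<And>A. A \<in> sets (lebesgue_on \<Omega>) \<Longrightarrow> lf (indicator A) = (\<integral>x. indicator A x * g x \<partial>lebesgue_on \<Omega>)"
    using bounded_linear_Lp_indicator_density[OF lf \<Omega> p0] by blast
  have gm: "g \<in> borel_measurable (lebesgue_on \<Omega>)" using g by simp
  note simple = bounded_linear_Lp_simple_function_eq[OF lf \<Omega> p0 g ind]
  have bounded: "lf v = (\<integral>x. v x * g x \<partial>lebesgue_on \<Omega>)"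
    if v: "v \<in> borel_measurable (lebesgue_on \<Omega>)" "\<And>x. \<bar>v x\<bar> \<le> B" for v :: "real^'n \<Rightarrow> real" and B
  proof (rule bounded_linear_Lp_eq_integral_if_simple[OF lf \<Omega> p0 simple _ gm])
    show "v \<in> Lp \<Omega> p" using v by (intro bounded_measurable_in_Lp[OF \<Omega> _ _ p0])
    show "integrable (lebesgue_on \<Omega>) (\<lambda>x. \<bar>v x\<bar> * \<bar>g x\<bar>)"
      using v g by (intro integrable_bounded_times[where B=B]) auto
  qed
  have g_Lq: "g \<in> Lp \<Omega> (p/(p-1))"
  proof (rule Lq_if_dual_bound[OF \<Omega> p g C(1)])
    fix v :: "real^'n \<Rightarrow> real" and B :: real
    assume v: "v \<in> borel_measurable (lebesgue_on \<Omega>)" "\<And>x. \<bar>v x\<bar> \<le> B"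
    then have "v \<in> Lp \<Omega> p" by (intro bounded_measurable_in_Lp[OF \<Omega> _ _ p0])
    then show "(\<integral>x. v x * g x \<partial>lebesgue_on \<Omega>) \<le> C * Lp_norm \<Omega> p v"
      using C(2) bounded[OF v] by fastforce
  qed
  have "lf u = (\<integral>x. u x * g x \<partial>lebesgue_on \<Omega>)" if u: "u \<in> Lp \<Omega> p" for u
  proof (rule bounded_linear_Lp_eq_integral_if_simple[OF lf \<Omega> p0 simple u gm])
    show "integrable (lebesgue_on \<Omega>) (\<lambda>x. \<bar>u x\<bar> * \<bar>g x\<bar>)"
      using integrable_norm[OF Lp_times_Lq_integrable[OF p u g_Lq]] by (simp add: abs_mult)
  qed
  with g_Lq show ?thesis by (rule that)
qed

lemma weak_conv_Lp_bounded_linear_tendsto: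
  fixes lf :: "(real^'n::finite \<Rightarrow> real) \<Rightarrow> real"
  assumes lf: "bounded_linear_Lp \<Omega> p lf" and \<Omega>: "\<Omega> \<in> lmeasurable" and p: "1 < p"
    and u: "u \<in> Lp \<Omega> p" and us: "\<And>k. us k \<in> Lp \<Omega> p" and conv: "weak_conv_Lp \<Omega> p us u"
  shows "(\<lambda>k. lf (us k)) \<longlonglongrightarrow> lf u"
proof -
  obtain g where g: "g \<in> Lp \<Omega> (p/(p-1))"
    and repr: "\<And>u. u \<in> Lp \<Omega> p \<Longrightarrow> lf u = (\<integral>x. u x * g x \<partial>lebesgue_on \<Omega>)"
    using Lp_dual_representation[OF lf \<Omega> p] by blast
  from conv g show ?thesis by (simp add: weak_conv_Lp_def repr[OF u] repr[OF us])
qed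

section \<open>Weak lower semicontinuity of \<open>TGV\<close>\<close>

lemma pd_eq_0_if_zero_on_open:
  assumes U: "open U" and f0: "\<And>y. y \<in> U \<Longrightarrow> f y = 0" and y: "y \<in> U"
  shows "pd j f y = 0"
proof -
  have "(f has_derivative (\<lambda>h. 0)) (at y)"
    by (rule has_derivative_transform_within_open[OF has_derivative_const U y]) (use f0 in auto)
  then show ?thesis by (simp add: pd_def frechet_derivative_at[symmetric])
qed

lemma pd_zero_fun: "pd j (\<lambda>y. 0) = (\<lambda>y. 0)"
  using pd_eq_0_if_zero_on_open[of UNIV "\<lambda>y. 0"] by auto

lemma div2_continuous_on:
  assumes "\<psi> \<in> C2c_sym \<Omega>"
  shows "continuous_on \<Omega> (div2 \<psi>)"
  using assms unfolding div2_def C2c_sym_def C2_on_def C1_on_def by (intro continuous_on_sum) blast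

lemma div2_eq_0_outside_support:
  assumes "y \<notin> closure {x. \<psi> x \<noteq> 0}"
  shows "div2 \<psi> y = 0"
proof -
  define S where "S = closure {x. \<psi> x \<noteq> 0}"
  have U: "open (- S)" unfolding S_def by (rule open_Compl[OF closed_closure])
  have "\<psi> z $ i $ j = 0" if "z \<in> - S" for z i j
  proof -
    have "\<psi> z = 0" using that closure_subset[of "{x. \<psi> x \<noteq> 0}"] by (auto simp: S_def)
    then show ?thesis by simp
  qed
  then have "pd j (\<lambda>y. \<psi> y $ i $ j) z = 0" if "z \<in> - S" for z i j
    by (rule pd_eq_0_if_zero_on_open[OF U _ that])
  then have "pd i (pd j (\<lambda>y. \<psi> y $ i $ j)) y = 0" for i j
    by (rule pd_eq_0_if_zero_on_open[OF U]) (use assms in \<open>auto simp: S_def\<close>)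
  then show ?thesis by (simp add: div2_def)
qed

lemma div2_bounded:
  assumes \<psi>: "\<psi> \<in> C2c_sym \<Omega>"
  obtains B where "\<And>x. \<bar>div2 \<psi> x\<bar> \<le> B"
proof -
  define S where "S = closure {x. \<psi> x \<noteq> 0}"
  have S: "compact S" "S \<subseteq> \<Omega>" using \<psi> by (auto simp: C2c_sym_def S_def)
  have "compact (div2 \<psi> ` S)"
    using compact_continuous_image continuous_on_subset div2_continuous_on[OF \<psi>] S by blast
  then obtain B where B: "\<And>x. x \<in> S \<Longrightarrow> \<bar>div2 \<psi> x\<bar> \<le> B"
    by (metis compact_imp_bounded bounded_iff imageI real_norm_def)
  have "\<bar>div2 \<psi> x\<bar> \<le> max B 0" for x
    using B[of x] div2_eq_0_outside_support[of x \<psi>] by (cases "x \<in> S") (auto simp: S_def)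
  then show ?thesis by (rule that)
qed

lemma div2_in_Lp:
  assumes \<psi>: "\<psi> \<in> C2c_sym \<Omega>" and \<Omega>: "\<Omega> \<in> lmeasurable" and q: "0 < q"
  shows "div2 \<psi> \<in> Lp \<Omega> q"
proof -
  obtain B where "\<And>x. \<bar>div2 \<psi> x\<bar> \<le> B" using div2_bounded[OF \<psi>] by blast
  moreover have "div2 \<psi> \<in> borel_measurable (lebesgue_on \<Omega>)"
    using continuous_imp_measurable_on_sets_lebesgue[OF div2_continuous_on[OF \<psi>]] \<Omega> by auto
  ultimately show ?thesis using \<Omega> q by (intro bounded_measurable_in_Lp)
qed

lemma set_integral_eq_integral_lebesgue_on:
  fixes f :: "'a::euclidean_space \<Rightarrow> real"
  assumes "\<Omega> \<in> sets lebesgue"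
  shows "(\<integral>x\<in>\<Omega>. f x \<partial>lebesgue) = (\<integral>x. f x \<partial>lebesgue_on \<Omega>)"
  using integral_restrict_space[of \<Omega> lebesgue f] assms by (simp add: set_lebesgue_integral_def)

lemma TGV_ge:
  assumes "\<psi> \<in> C2c_sym \<Omega>" "lux_norm \<Omega> (conj_phi \<phi>) (\<lambda>x. norm (\<psi> x)) \<le> ereal \<alpha>1"
    "lux_norm \<Omega> (conj_phi \<phi>) (\<lambda>x. norm (div1 \<psi> x)) \<le> ereal \<alpha>2"
  shows "ereal (\<integral>x\<in>\<Omega>. u x * div2 \<psi> x \<partial>lebesgue) \<le> TGV \<Omega> \<phi> \<alpha>1 \<alpha>2 u"
  unfolding TGV_def by (rule SUP_upper) (use assms in auto)

lemma lux_norm_conj_zero_le: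
  assumes nonneg: "\<And>x s. x \<in> \<Omega> \<Longrightarrow> 0 \<le> s \<Longrightarrow> 0 \<le> \<phi> x s" and a: "0 < a"
  shows "lux_norm \<Omega> (conj_phi \<phi>) (\<lambda>x. 0) \<le> ereal a"
proof -
  have conj_0: "conj_phi \<phi> x 0 \<le> 0" if "x \<in> \<Omega>" for x
    unfolding conj_phi_def
  proof (rule SUP_least)
    fix s :: real assume "s \<in> {0..}"
    then have "0 \<le> \<phi> x s" using nonneg that by auto
    then show "ereal (s * 0) - \<phi> x s \<le> 0" by (cases "\<phi> x s") auto
  qed
  have "(\<integral>\<^sup>+x\<in>\<Omega>. e2ennreal (conj_phi \<phi> x (0 / a)) \<partial>lebesgue) = (\<integral>\<^sup>+x\<in>\<Omega>. 0 \<partial>lebesgue)"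
    by (rule nn_integral_cong) (auto simp: indicator_def e2ennreal_neg conj_0)
  then show ?thesis
    unfolding lux_norm_def using a by (intro Inf_lower imageI) simp
qed

lemma TGV_nonneg:
  fixes \<Omega> :: "(real^'n::finite) set"
  assumes nonneg: "\<And>x s. x \<in> \<Omega> \<Longrightarrow> 0 \<le> s \<Longrightarrow> 0 \<le> \<phi> x s" and "0 < \<alpha>1" "0 < \<alpha>2"
  shows "0 \<le> TGV \<Omega> \<phi> \<alpha>1 \<alpha>2 u"
proof -
  have "(\<lambda>x. 0 :: real^'n^'n) \<in> C2c_sym \<Omega>"
    by (simp add: C2c_sym_def C2_on_def C1_on_def pd_zero_fun transpose_def vec_eq_iff)
  moreover have "div1 (\<lambda>x. 0 :: real^'n^'n) = (\<lambda>x. 0)" "div2 (\<lambda>x. 0 :: real^'n^'n) = (\<lambda>x. 0)"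
    by (simp_all add: div1_def div2_def pd_zero_fun vec_eq_iff fun_eq_iff)
  ultimately have "ereal (\<integral>x\<in>\<Omega>. u x * 0 \<partial>lebesgue) \<le> TGV \<Omega> \<phi> \<alpha>1 \<alpha>2 u"
    using TGV_ge[of "\<lambda>x. 0" \<Omega> \<phi> \<alpha>1 \<alpha>2 u] lux_norm_conj_zero_le[of \<Omega> \<phi>, OF nonneg] assms(2,3)
    by simp
  then show ?thesis by (simp add: zero_ereal_def)
qed

lemma TGV_weak_lsc:
  assumes \<Omega>: "\<Omega> \<in> lmeasurable" and p: "1 < p" and conv: "weak_conv_Lp \<Omega> p us u"
  shows "TGV \<Omega> \<phi> \<alpha>1 \<alpha>2 u \<le> liminf (\<lambda>k. TGV \<Omega> \<phi> \<alpha>1 \<alpha>2 (us k))"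
  unfolding TGV_def[of \<Omega> \<phi> \<alpha>1 \<alpha>2 u]
proof (rule SUP_least, clarify)
  fix \<psi> assume \<psi>: "\<psi> \<in> C2c_sym \<Omega>" "lux_norm \<Omega> (conj_phi \<phi>) (\<lambda>x. norm (\<psi> x)) \<le> ereal \<alpha>1"
    "lux_norm \<Omega> (conj_phi \<phi>) (\<lambda>x. norm (div1 \<psi> x)) \<le> ereal \<alpha>2"
  have \<Omega>_sets: "\<Omega> \<in> sets lebesgue" using \<Omega> by (rule fmeasurableD)
  have "div2 \<psi> \<in> Lp \<Omega> (p/(p-1))" by (rule div2_in_Lp[OF \<psi>(1) \<Omega>]) (use p in simp)
  then have "(\<lambda>k. \<integral>x. us k x * div2 \<psi> x \<partial>lebesgue_on \<Omega>) \<longlonglongrightarrow> (\<integral>x. u x * div2 \<psi> x \<partial>lebesgue_on \<Omega>)"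
    using conv by (simp add: weak_conv_Lp_def)
  then have "ereal (\<integral>x. u x * div2 \<psi> x \<partial>lebesgue_on \<Omega>) =
      liminf (\<lambda>k. ereal (\<integral>x. us k x * div2 \<psi> x \<partial>lebesgue_on \<Omega>))"
    by (intro lim_imp_Liminf[symmetric] tendsto_ereal) simp_all
  also have "\<dots> \<le> liminf (\<lambda>k. TGV \<Omega> \<phi> \<alpha>1 \<alpha>2 (us k))"
    using TGV_ge[OF \<psi>] by (intro Liminf_mono always_eventually allI)
      (simp add: set_integral_eq_integral_lebesgue_on[OF \<Omega>_sets])
  finally show "ereal (\<integral>x\<in>\<Omega>. u x * div2 \<psi> x \<partial>lebesgue) \<le> liminf (\<lambda>k. TGV \<Omega> \<phi> \<alpha>1 \<alpha>2 (us k))"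
    by (simp add: set_integral_eq_integral_lebesgue_on[OF \<Omega>_sets])
qed

lemma norm_diff_eventually_gt:
  fixes a b :: "nat \<Rightarrow> 'h::real_inner"
  assumes weak: "(\<lambda>k. inner (c - d) (a k)) \<longlonglongrightarrow> inner (c - d) c" and b: "b \<longlonglongrightarrow> d" and e: "0 < e"
  shows "eventually (\<lambda>k. norm (c - d) - e < norm (a k - b k)) sequentially"
proof (cases "c = d")
  case True
  then show ?thesis
    using e by (intro always_eventually allI) (simp add: less_le_trans[OF _ norm_ge_zero])
next
  case False
  define h where "h = c - d"
  have h: "0 < norm h" using False by (simp add: h_def)
  define \<delta> where "\<delta> k = (inner h c - inner h (a k)) + norm h * norm (b k - d)" for k
  have "(\<lambda>k. norm (b k - d)) \<longlonglongrightarrow> 0"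
    using tendsto_norm[OF LIM_zero[OF b]] by simp
  then have "\<delta> \<longlonglongrightarrow> (inner h c - inner h c) + norm h * 0"
    unfolding \<delta>_def h_def by (intro tendsto_add tendsto_diff tendsto_mult tendsto_const weak)
  then have "eventually (\<lambda>k. \<delta> k < e * norm h) sequentially"
    using e h by (intro order_tendstoD(2)) auto
  then show ?thesis
  proof (rule eventually_mono)
    fix k assume \<delta>: "\<delta> k < e * norm h"
    \<comment> \<open>\<open>h = (a k - b k) + (c - a k) + (b k - d)\<close>, paired with \<open>h\<close>\<close>
    have "norm h ^ 2 = inner h (a k - b k) + (inner h c - inner h (a k)) + inner h (b k - d)"
      by (simp add: power2_norm_eq_inner h_def algebra_simps inner_diff_right)
    also have "\<dots> \<le> norm h * norm (a k - b k) + \<delta> k"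
      using norm_cauchy_schwarz[of h "a k - b k"] norm_cauchy_schwarz[of h "b k - d"]
      by (simp add: \<delta>_def)
    finally have "norm h * (norm h - e) < norm h * norm (a k - b k)"
      using \<delta> by (simp add: power2_eq_square algebra_simps)
    then show "norm (c - d) - e < norm (a k - b k)"
      using h by (simp add: h_def)
  qed
qed

lemma residual_weak_lsc:
  fixes K :: "(real^'n::finite \<Rightarrow> real) \<Rightarrow> 'h::real_inner"
  assumes K: "bounded_linear_Lp \<Omega> p K" and \<Omega>: "\<Omega> \<in> lmeasurable" and p: "1 < p"
    and u: "u \<in> Lp \<Omega> p" and us: "\<And>k. us k \<in> Lp \<Omega> p" and conv: "weak_conv_Lp \<Omega> p us u"
    and fs: "fs \<longlonglongrightarrow> f"
  shows "ereal (1/2 * norm (K u - f)) \<le> liminf (\<lambda>k. ereal (1/2 * norm (K (us k) - fs k)))"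
  unfolding le_Liminf_iff
proof (intro allI impI)
  fix y assume y: "y < ereal (1/2 * norm (K u - f))"
  have weak: "(\<lambda>k. inner (K u - f) (K (us k))) \<longlonglongrightarrow> inner (K u - f) (K u)"
    by (rule weak_conv_Lp_bounded_linear_tendsto[OF bounded_linear_Lp_inner[OF K] \<Omega> p u us conv])
  show "eventually (\<lambda>k. y < ereal (1/2 * norm (K (us k) - fs k))) sequentially"
  proof (cases y)
    case (real r)
    then have "0 < norm (K u - f) - 2 * r" using y by simp
    from norm_diff_eventually_gt[OF weak fs this] show ?thesis
      by eventually_elim (simp add: real)
  qed (use y in auto)
qed

lemma Gamma_conv_weak_Lp_add_lsc:
  fixes D :: "nat \<Rightarrow> (real^'n::finite \<Rightarrow> real) \<Rightarrow> real" and D0 :: "(real^'n \<Rightarrow> real) \<Rightarrow> real"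
    and T :: "(real^'n \<Rightarrow> real) \<Rightarrow> ereal"
  assumes D_lsc: "\<And>u us. u \<in> Lp \<Omega> p \<Longrightarrow> (\<And>k. us k \<in> Lp \<Omega> p) \<Longrightarrow> weak_conv_Lp \<Omega> p us u \<Longrightarrow>
      ereal (D0 u) \<le> liminf (\<lambda>k. ereal (D k (us k)))"
    and D_lim: "\<And>u. u \<in> Lp \<Omega> p \<Longrightarrow> (\<lambda>k. D k u) \<longlonglongrightarrow> D0 u"
    and D_nonneg: "\<And>k u. 0 \<le> D k u"
    and T_lsc: "\<And>u us. weak_conv_Lp \<Omega> p us u \<Longrightarrow> T u \<le> liminf (\<lambda>k. T (us k))"
    and T_nonneg: "\<And>u. 0 \<le> T u"
  shows "Gamma_conv_weak_Lp \<Omega> p (\<lambda>k u. ereal (D k u) + T u) (\<lambda>u. ereal (D0 u) + T u)"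
  unfolding Gamma_conv_weak_Lp_def
proof (intro ballI conjI allI impI)
  fix u us assume u: "u \<in> Lp \<Omega> p" and us: "(\<forall>k. us k \<in> Lp \<Omega> p) \<and> weak_conv_Lp \<Omega> p us u"
  have "ereal (D0 u) + T u \<le> liminf (\<lambda>k. ereal (D k (us k))) + liminf (\<lambda>k. T (us k))"
    using D_lsc[OF u] T_lsc us by (intro add_mono) auto
  moreover have "0 \<le> liminf (\<lambda>k. ereal (D k (us k)))" "0 \<le> liminf (\<lambda>k. T (us k))"
    using D_nonneg T_nonneg by (simp_all add: Liminf_bounded)
  then have "liminf (\<lambda>k. ereal (D k (us k))) + liminf (\<lambda>k. T (us k))
      \<le> liminf (\<lambda>k. ereal (D k (us k)) + T (us k))"
    by (intro ereal_liminf_add_mono) auto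
  ultimately show "ereal (D0 u) + T u \<le> liminf (\<lambda>k. ereal (D k (us k)) + T (us k))"
    by (rule order_trans)
next
  fix u assume u: "u \<in> Lp \<Omega> p"
  have "limsup (\<lambda>k. ereal (D k u) + T u) = ereal (D0 u) + T u"
    using D_lim[OF u] by (intro lim_imp_Limsup tendsto_add_ereal_general) auto
  then show "\<exists>us. (\<forall>k. us k \<in> Lp \<Omega> p) \<and> weak_conv_Lp \<Omega> p us u \<and>
      limsup (\<lambda>k. ereal (D k (us k)) + T (us k)) \<le> ereal (D0 u) + T u"
    using u by (intro exI[of _ "\<lambda>k. u"]) (simp add: weak_conv_Lp_def)
qed

theorem theorem4p11:
  fixes \<Omega> :: "(real^'n::finite) set"
    and \<phi> :: "real^'n \<Rightarrow> real \<Rightarrow> ereal"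
    and \<alpha>1 \<alpha>2 p :: real
    and K :: "(real^'n \<Rightarrow> real) \<Rightarrow> 'h::{real_inner, complete_space}"
    and fs :: "nat \<Rightarrow> 'h" and f :: 'h
  assumes "bounded \<Omega>" "connected \<Omega>" "open \<Omega>" "C1_boundary \<Omega>"
    and "Phi_w \<Omega> \<phi>" "A0 \<Omega> \<phi>"
    and "\<alpha>1 > 0" "\<alpha>2 > 0"
    and "1 < p" "(real CARD('n) - 1) * p \<le> real CARD('n)"
    and "bounded_linear_Lp \<Omega> p K" "injective_on_affine \<Omega> K"
    and "fs \<longlonglongrightarrow> f"
  shows "Gamma_conv_weak_Lp \<Omega> p
           (\<lambda>k u. ereal (1/2 * norm (K u - fs k)) + TGV \<Omega> \<phi> \<alpha>1 \<alpha>2 u)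
           (\<lambda>u. ereal (1/2 * norm (K u - f)) + TGV \<Omega> \<phi> \<alpha>1 \<alpha>2 u)"
proof (rule Gamma_conv_weak_Lp_add_lsc)
  have \<Omega>: "\<Omega> \<in> lmeasurable" using \<open>bounded \<Omega>\<close> \<open>open \<Omega>\<close> by (rule lmeasurable_open)
  show "ereal (1/2 * norm (K u - f)) \<le> liminf (\<lambda>k. ereal (1/2 * norm (K (us k) - fs k)))"
    if "u \<in> Lp \<Omega> p" "\<And>k. us k \<in> Lp \<Omega> p" "weak_conv_Lp \<Omega> p us u" for u us
    using residual_weak_lsc[OF \<open>bounded_linear_Lp \<Omega> p K\<close> \<Omega> \<open>1 < p\<close> that \<open>fs \<longlonglongrightarrow> f\<close>] .
  show "(\<lambda>k. 1/2 * norm (K u - fs k)) \<longlonglongrightarrow> 1/2 * norm (K u - f)" for u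
    using \<open>fs \<longlonglongrightarrow> f\<close> by (intro tendsto_intros)
  show "TGV \<Omega> \<phi> \<alpha>1 \<alpha>2 u \<le> liminf (\<lambda>k. TGV \<Omega> \<phi> \<alpha>1 \<alpha>2 (us k))" if "weak_conv_Lp \<Omega> p us u" for u us
    using TGV_weak_lsc[OF \<Omega> \<open>1 < p\<close> that] .
  have "\<And>x s. x \<in> \<Omega> \<Longrightarrow> 0 \<le> s \<Longrightarrow> 0 \<le> \<phi> x s"
    using \<open>Phi_w \<Omega> \<phi>\<close> unfolding Phi_w_def by blast
  then show "0 \<le> TGV \<Omega> \<phi> \<alpha>1 \<alpha>2 u" for u
    using TGV_nonneg \<open>\<alpha>1 > 0\<close> \<open>\<alpha>2 > 0\<close> by blast
qed simp

end
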